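(* Let $0<r\le 1/2$, $0\le\rho\le 1$, and let $\alpha$ satisfy $0\le\alpha<r$, with $\alpha$ the asymptotic red edge fraction of the Biased Preferential Attachment Model described in the context. Define $$K_B=\frac12\left(\frac{r\rho}{\alpha+\rho(1-\alpha)}+\frac{1-r}{\alpha\rho+1-\alpha}\right),\qquad \beta_B=1+\frac{1}{K_B}.$$ Then $\beta_B>2$.
   Context: In the BPAM, nodes arrive sequentially and are labeled red with probability $r$ (minority, $0<r\le1/2$) or blue with probability $1-r$. Each new node attaches by preferential attachment, with a cross-label edge accepted only with probability $\rho\in[0,1]$ (retrying otherwise), and every node has outdegree $d$. $\alpha$ denotes the limit as $N\to\infty$ of the expected fraction of the total degree $2Nd$ belonging to red nodes. It satisfies the power inequality $\alpha<r$. $\beta_B$ is the power-law exponent of the blue community's asymptotic degree distribution, i.e. the number of blue nodes of degree at least $k$ scales as $k^{-\beta_B}$. *)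

theory Defs
  imports Complex_Main
begin

definition K_B :: "real \<Rightarrow> real \<Rightarrow> real \<Rightarrow> real" where
  "K_B r \<rho> \<alpha> = (1/2) * (r * \<rho> / (\<alpha> + \<rho> * (1 - \<alpha>)) + (1 - r) / (\<alpha> * \<rho> + 1 - \<alpha>))"

definition beta_B :: "real \<Rightarrow> real \<Rightarrow> real \<Rightarrow> real" where
  "beta_B r \<rho> \<alpha> = 1 + 1 / K_B r \<rho> \<alpha>"

end

theory Submission
  imports Defs
begin

text \<open>Since \<open>\<beta>\<^sub>B = 1 + 1/K\<^sub>B\<close>, it suffices that \<open>0 < K\<^sub>B < 1\<close>. Both summands of \<open>2 K\<^sub>B\<close> are
  nonnegative and the second is positive. The first is at most \<open>r\<close> because
  \<open>\<rho> \<le> \<alpha> + \<rho>(1 - \<alpha>)\<close>, and the second is below \<open>1\<close> because its denominator is at least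
  \<open>1 - \<alpha> > 1 - r\<close>; hence \<open>2 K\<^sub>B < r + 1 \<le> 2\<close>.\<close>

lemma divide_rho_denominator_le_one:
  fixes \<rho> \<alpha> :: real
  assumes "0 \<le> \<rho>" "\<rho> \<le> 1" "0 \<le> \<alpha>" "\<alpha> \<le> 1"
  shows "\<rho> / (\<alpha> + \<rho> * (1 - \<alpha>)) \<le> 1"
proof (cases "\<rho> = 0")
  case False
  have "\<rho> \<le> \<alpha> + \<rho> * (1 - \<alpha>)"
    using assms by (simp add: algebra_simps mult_left_le)
  with False assms show ?thesis by simp
qed simp

lemma divide_one_minus_denominator_less_one:
  fixes r \<rho> \<alpha> :: real
  assumes "0 \<le> \<rho>" "0 \<le> \<alpha>" "\<alpha> < r" "r \<le> 1"
  shows "(1 - r) / (\<alpha> * \<rho> + 1 - \<alpha>) < 1"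
proof -
  have "1 - r < \<alpha> * \<rho> + 1 - \<alpha>"
    using assms by (smt (verit) mult_nonneg_nonneg)
  moreover have "0 < \<alpha> * \<rho> + 1 - \<alpha>"
    using assms by (smt (verit) mult_nonneg_nonneg)
  ultimately show ?thesis by simp
qed

lemma K_B_pos:
  fixes r \<rho> \<alpha> :: real
  assumes "0 \<le> r" "r < 1" "0 \<le> \<rho>" "0 \<le> \<alpha>" "\<alpha> < 1"
  shows "0 < K_B r \<rho> \<alpha>"
proof -
  have "0 \<le> r * \<rho> / (\<alpha> + \<rho> * (1 - \<alpha>))"
    using assms by simp
  moreover have "0 < (1 - r) / (\<alpha> * \<rho> + 1 - \<alpha>)"
    using assms by (smt (verit) divide_pos_pos mult_nonneg_nonneg)
  ultimately show ?thesis
    unfolding K_B_def by simp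
qed

lemma K_B_less_one:
  fixes r \<rho> \<alpha> :: real
  assumes "0 \<le> r" "r \<le> 1" "0 \<le> \<rho>" "\<rho> \<le> 1" "0 \<le> \<alpha>" "\<alpha> < r"
  shows "K_B r \<rho> \<alpha> < 1"
proof -
  have "r * \<rho> / (\<alpha> + \<rho> * (1 - \<alpha>)) \<le> r"
    using mult_left_le[OF divide_rho_denominator_le_one] assms by simp
  moreover have "(1 - r) / (\<alpha> * \<rho> + 1 - \<alpha>) < 1"
    using divide_one_minus_denominator_less_one assms by simp
  ultimately show ?thesis
    unfolding K_B_def using assms by simp
qed

lemma beta_B_greater_two:
  assumes "0 < K_B r \<rho> \<alpha>" "K_B r \<rho> \<alpha> < 1"
  shows "2 < beta_B r \<rho> \<alpha>"
  using assms unfolding beta_B_def by simp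

theorem proposition4:
  fixes r \<rho> \<alpha> :: real
  assumes "0 < r" and "r \<le> 1/2"
    and "0 \<le> \<rho>" and "\<rho> \<le> 1"
    and "0 \<le> \<alpha>" and "\<alpha> < r"
  shows "beta_B r \<rho> \<alpha> > 2"
  using assms by (intro beta_B_greater_two K_B_pos K_B_less_one) auto

end
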